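(* Let $W=I_2(m)$, $m\ge3$. Writing $X^{(m)}_{\alpha\ldots}=\sum_{w\in W}q_w\delta_w$ with $q_w\in\mathcal{Q}$, the coefficient $c^{(m-3)}_{\beta,\alpha}$ of $\delta^{(m-3)}_{\beta\ldots}$ equals $$c^{(m-3)}_{\beta,\alpha}=\begin{cases}-\,y_\alpha\,\upsilon^{(3)}_\beta\big\{S^{(0,m-3)}_\beta(y_\alpha y_\beta)+s_\alpha(y_\alpha y_\beta)\big\},& m\text{ even},\\ \ \ \,y_\alpha\,\upsilon^{(3)}_\beta\big\{S^{(0,m-3)}_\beta(y_\alpha y_\beta)+s_\alpha(y_\alpha y_\beta)\big\},& m\text{ odd}.\end{cases}$$ Symmetrically, the coefficient $c^{(m-3)}_{\alpha,\beta}$ of $\delta^{(m-3)}_{\alpha\ldots}$ in $X^{(m)}_{\beta\ldots}$ is given by the same formula with $\alpha$ and $\beta$ interchanged.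
   Context: General setup: $W$ a finite real reflection group with root system $\Sigma$; $R$ an integral domain containing the ring $\mathcal{R}\subset\mathbb{R}$ generated by the coefficients of roots in the basis of simple roots; $F$ a one-dimensional commutative formal group law over $R$; $\mathcal{S}$ the formal root algebra (the quotient of the completed polynomial ring $R[[x_\lambda:\lambda\in\Lambda]]$, $\Lambda$ the lattice spanned by $\mathcal{R}$-multiples of roots, by the closed ideal generated by $x_0$ and the relations $x_{e_i\gamma+e_j\gamma'}=(e_ix_\gamma)+_F(e_jx_{\gamma'})$ for roots $\gamma,\gamma'$ and a fixed $\mathbb{Z}$-basis $(e_1=1,\dots,e_l)$ of $\mathcal{R}$), with $W$ acting by $w(x_\lambda)=x_{w(\lambda)}$; $\mathcal{Q}$ its localization at all $x_\gamma$; $\mathcal{Q}_W=\mathcal{Q}\otimes_RR[W]$ with left $\mathcal{Q}$-basis $\{\delta_w\}$ and product $(q\delta_w)(q'\delta_{w'})=q\,w(q')\delta_{ww'}$, $\mathbf 1=\delta_1$; $\delta_\gamma=\delta_{s_\gamma}$, $X_\gamma=\frac1{x_\gamma}(\mathbf 1-\delta_\gamma)$. Dihedral notation: $W=I_2(m)$, simple roots $\alpha,\beta$; $y_\gamma=1/x_\gamma\in\mathcal{Q}$; $W$ acts on products multiplicatively, $s(y_\gamma)=y_{s(\gamma)}$. $X^{(i)}_{\alpha\ldots}=X_\alpha X_\beta X_\alpha\cdots$ ($i$ alternating factors), $X^{(i)}_{\beta\ldots}$, $\delta^{(i)}_{\alpha\ldots}=\delta_\alpha\delta_\beta\cdots$,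 $\delta^{(i)}_{\beta\ldots}$, $s^{(i)}_{\alpha\ldots}=s_\alpha s_\beta\cdots$, $s^{(i)}_{\beta\ldots}$ ($i$ factors; $i=0$ gives $\mathbf 1$ / identity). $\omega_j=\alpha$ for $j$ even, $\omega_j=\beta$ for $j$ odd. For $0\le i\le m-1$: $\upsilon^{(i)}_\alpha=\prod_{j=0}^{m-i-1}s^{(j)}_{\alpha\ldots}(y_{\omega_j})$ and $\upsilon^{(i)}_\beta=\prod_{j=0}^{m-i-1}s^{(j)}_{\beta\ldots}(y_{\omega_{j+1}})$ (empty product $=1$). For $i\le j$: $S^{(i,j)}_\alpha(u)=\sum_{k=i}^js^{(k)}_{\alpha\ldots}(u)$, $S^{(i,j)}_\beta(u)=\sum_{k=i}^js^{(k)}_{\beta\ldots}(u)$; an empty range gives $0$. *)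

theory Defs
  imports Complex_Main
begin

type_synonym vec = "real \<times> real"
type_synonym wel = "vec \<Rightarrow> vec"   (* elements of W, as linear maps of R^2 *)

definition ip :: "vec \<Rightarrow> vec \<Rightarrow> real" where
  "ip u v = fst u * fst v + snd u * snd v"

definition refl :: "vec \<Rightarrow> wel" where
  "refl v = (\<lambda>u. (fst u - 2 * ip u v / ip v v * fst v, snd u - 2 * ip u v / ip v v * snd v))"

text \<open>Simple roots of I_2(m): angle between them is pi - pi/m.\<close>
definition root_a :: "nat \<Rightarrow> vec" where "root_a m = (1, 0)"
definition root_b :: "nat \<Rightarrow> vec" where "root_b m = (- cos (pi / real m), sin (pi / real m))"

fun alt :: "('a \<Rightarrow> 'a) \<Rightarrow> ('a \<Rightarrow> 'a) \<Rightarrow> nat \<Rightarrow> 'a \<Rightarrow> 'a" where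
  "alt a b 0 = id"
| "alt a b (Suc i) = a \<circ> alt b a i"

definition sa :: "nat \<Rightarrow> wel" where "sa m = refl (root_a m)"
definition sb :: "nat \<Rightarrow> wel" where "sb m = refl (root_b m)"

definition Wgrp :: "nat \<Rightarrow> wel set" where
  "Wgrp m = range (alt (sa m) (sb m)) \<union> range (alt (sb m) (sa m))"

definition roots :: "nat \<Rightarrow> vec set" where
  "roots m = (\<lambda>w. w (root_a m)) ` Wgrp m \<union> (\<lambda>w. w (root_b m)) ` Wgrp m"

text \<open>An element sum_w q_w delta_w of Q_W is represented by its coefficient function w \<mapsto> q_w
  (only values on W matter). The product is (q delta_u)(q' delta_v) = q u(q') delta_{uv}.\<close>

definition tmul :: "nat \<Rightarrow> (wel \<Rightarrow> 'q \<Rightarrow> 'q::comm_ring_1) \<Rightarrow> (wel \<Rightarrow> 'q) \<Rightarrow> (wel \<Rightarrow> 'q) \<Rightarrow> (wel \<Rightarrow> 'q)" where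
  "tmul m act P P' = (\<lambda>w. \<Sum>(u, v) \<in> {(u, v). u \<in> Wgrp m \<and> v \<in> Wgrp m \<and> u \<circ> v = w}. P u * act u (P' v))"

definition delta :: "wel \<Rightarrow> (wel \<Rightarrow> 'q::comm_ring_1)" where
  "delta w = (\<lambda>u. if u = w then 1 else 0)"

text \<open>X_gamma = (1/x_gamma)(1 - delta_gamma), with y = 1/x.\<close>
definition Xop :: "(vec \<Rightarrow> 'q::comm_ring_1) \<Rightarrow> vec \<Rightarrow> (wel \<Rightarrow> 'q)" where
  "Xop y g = (\<lambda>u. y g * delta id u - y g * delta (refl g) u)"

fun Xalt :: "nat \<Rightarrow> (wel \<Rightarrow> 'q \<Rightarrow> 'q::comm_ring_1) \<Rightarrow> (vec \<Rightarrow> 'q) \<Rightarrow> vec \<Rightarrow> vec \<Rightarrow> nat \<Rightarrow> (wel \<Rightarrow> 'q)" where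
  "Xalt m act y a b 0 = delta id"
| "Xalt m act y a b (Suc i) = tmul m act (Xop y a) (Xalt m act y b a i)"

definition omega :: "nat \<Rightarrow> nat \<Rightarrow> vec" where
  "omega m j = (if even j then root_a m else root_b m)"

definition ups_a :: "nat \<Rightarrow> (wel \<Rightarrow> 'q \<Rightarrow> 'q::comm_ring_1) \<Rightarrow> (vec \<Rightarrow> 'q) \<Rightarrow> nat \<Rightarrow> 'q" where
  "ups_a m act y i = (\<Prod>j = 0..<m - i. act (alt (sa m) (sb m) j) (y (omega m j)))"

definition ups_b :: "nat \<Rightarrow> (wel \<Rightarrow> 'q \<Rightarrow> 'q::comm_ring_1) \<Rightarrow> (vec \<Rightarrow> 'q) \<Rightarrow> nat \<Rightarrow> 'q" where
  "ups_b m act y i = (\<Prod>j = 0..<m - i. act (alt (sb m) (sa m) j) (y (omega m (j + 1))))"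

definition S_a :: "nat \<Rightarrow> (wel \<Rightarrow> 'q \<Rightarrow> 'q::comm_ring_1) \<Rightarrow> nat \<Rightarrow> nat \<Rightarrow> 'q \<Rightarrow> 'q" where
  "S_a m act i j u = (\<Sum>k = i..j. act (alt (sa m) (sb m) k) u)"

definition S_b :: "nat \<Rightarrow> (wel \<Rightarrow> 'q \<Rightarrow> 'q::comm_ring_1) \<Rightarrow> nat \<Rightarrow> nat \<Rightarrow> 'q \<Rightarrow> 'q" where
  "S_b m act i j u = (\<Sum>k = i..j. act (alt (sb m) (sa m) k) u)"

end

theory Submission
  imports Defs
begin

text \<open>Every element of \<open>I_2(m)\<close> is a rotation or a mirror through an integer multiple of
  \<open>\<pi>/m\<close>, so the alternating words of length at most \<open>m\<close> are pairwise distinct, except that both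
  empty words are \<open>1\<close> and the two words of length \<open>m\<close> agree. Left multiplication by \<open>X_c\<close>
  acts on coefficient functions by \<open>(X_c P)_w = y_c P_w - y_c s_c(P_(s_c w))\<close>. Hence the product
  \<open>X_c X_d X_c \<dots>\<close> of \<open>i\<close> factors is supported on words of length \<open>\<le> i\<close>, the word \<open>c d \<dots>\<close>
  being the only one of length \<open>i\<close>, and inductions on \<open>i\<close> compute in turn its coefficients at
  the words \<open>c d \<dots>\<close> of length \<open>i\<close>, \<open>d c \<dots>\<close> of length \<open>i - 1\<close>, \<open>c d \<dots>\<close> of length \<open>i - 2\<close>
  and \<open>d c \<dots>\<close> of length \<open>i - 3\<close>; the last one for \<open>i = m\<close> is the claimed coefficient.\<close>

definition rotation :: "real \<Rightarrow> wel" where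
  "rotation t = (\<lambda>u. (cos t * fst u - sin t * snd u, sin t * fst u + cos t * snd u))"

definition mirror :: "real \<Rightarrow> wel" where
  "mirror t = (\<lambda>u. (cos t * fst u + sin t * snd u, sin t * fst u - cos t * snd u))"

lemma rotation_0: "rotation 0 = id"
  by (rule ext) (simp add: rotation_def)

lemma mirror_comp_mirror: "mirror s \<circ> mirror t = rotation (s - t)"
  by (rule ext) (simp add: mirror_def rotation_def cos_diff sin_diff algebra_simps)

lemma mirror_comp_rotation: "mirror s \<circ> rotation t = mirror (s - t)"
  by (rule ext) (simp add: mirror_def rotation_def cos_diff sin_diff algebra_simps)

lemma rotation_neq_mirror: "rotation s \<noteq> mirror t"
proof
  assume "rotation s = mirror t"
  then have "rotation s (1, 0) = mirror t (1, 0)" "rotation s (0, 1) = mirror t (0, 1)" by simp_all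
  then have "cos s = 0" "sin s = 0" by (simp_all add: rotation_def mirror_def)
  then show False using sin_cos_squared_add[of s] by simp
qed

lemma rotation_eq_imp: "rotation s = rotation t \<Longrightarrow> \<exists>n::int. s = t + 2 * pi * n"
proof -
  assume "rotation s = rotation t"
  then have "rotation s (1, 0) = rotation t (1, 0)" by simp
  then have "sin s = sin t \<and> cos s = cos t" by (simp add: rotation_def)
  then show ?thesis by (simp add: sin_cos_eq_iff)
qed

lemma mirror_eq_imp: "mirror s = mirror t \<Longrightarrow> \<exists>n::int. s = t + 2 * pi * n"
proof -
  assume "mirror s = mirror t"
  then have "mirror s (1, 0) = mirror t (1, 0)" by simp
  then have "sin s = sin t \<and> cos s = cos t" by (simp add: mirror_def)
  then show ?thesis by (simp add: sin_cos_eq_iff)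
qed

lemma rotation_periodic: "rotation (t + 2 * pi * of_int n) = rotation t"
  by (rule ext) (simp add: rotation_def cos_add sin_add)

lemma mirror_periodic: "mirror (t + 2 * pi * of_int n) = mirror t"
  by (rule ext) (simp add: mirror_def cos_add sin_add)

lemma refl_root_a: "refl (root_a m) = mirror pi"
  by (rule ext) (simp add: refl_def mirror_def root_a_def ip_def)

lemma refl_root_b: "refl (root_b m) = mirror (pi - 2 * (pi / real m))"
proof (rule ext)
  fix u :: vec
  define t where "t = pi / real m"
  have n: "cos t * cos t + sin t * sin t = 1"
    using sin_cos_squared_add[of t] by (simp add: power2_eq_square)
  have c2: "cos (t * 2) = 2 * cos t * cos t - 1"
    using cos_double_cos[of t] by (simp add: power2_eq_square mult.commute)
  have s2: "sin (t * 2) = 2 * sin t * cos t"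
    using sin_double[of t] by (simp add: mult.commute)
  have "refl (root_b m) u = mirror (pi - 2 * t) u"
    by (simp add: refl_def mirror_def root_b_def ip_def t_def[symmetric] n cos_diff sin_diff
        prod_eq_iff algebra_simps c2 s2) (use n in algebra)
  then show "refl (root_b m) u = mirror (pi - 2 * (pi / real m)) u" by (simp add: t_def)
qed

lemma alt_mirror_pi:
  "alt (mirror pi) (mirror (pi - 2 * t)) n =
     (if even n then rotation (real n * t) else mirror (pi + (real n - 1) * t))
   \<and> alt (mirror (pi - 2 * t)) (mirror pi) n =
     (if even n then rotation (- real n * t) else mirror (pi - (real n + 1) * t))"
proof (induction n)
  case (Suc n)
  then show ?case
    by (cases "even n") (simp_all add: mirror_comp_mirror mirror_comp_rotation algebra_simps)
qed (simp add: rotation_0)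

definition dihedral_elt :: "nat \<Rightarrow> bool \<Rightarrow> int \<Rightarrow> wel" where
  "dihedral_elt m r k = (if r then rotation else mirror) (of_int k * (pi / real m))"

lemma dihedral_elt_eq_imp:
  assumes m: "0 < m" and eq: "dihedral_elt m r k = dihedral_elt m r' l"
  shows "r = r' \<and> 2 * int m dvd k - l"
proof -
  have r: "r = r'"
    using eq rotation_neq_mirror rotation_neq_mirror[symmetric]
    by (simp add: dihedral_elt_def split: if_splits)
  have "\<exists>n::int. of_int k * (pi / real m) = of_int l * (pi / real m) + 2 * pi * n"
  proof (cases r)
    case True
    then show ?thesis using eq r by (intro rotation_eq_imp) (simp add: dihedral_elt_def)
  next
    case False
    then show ?thesis using eq r by (intro mirror_eq_imp) (simp add: dihedral_elt_def)
  qed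
  then obtain n :: int where "of_int k * (pi / real m) = of_int l * (pi / real m) + 2 * pi * n" ..
  then have "of_int k * (pi / real m) = of_int (l + 2 * int m * n) * (pi / real m)"
    using m by (simp add: field_simps)
  then have "real_of_int k = of_int (l + 2 * int m * n)"
    using m by simp
  then have "k = l + 2 * int m * n"
    by (simp only: of_int_eq_iff)
  with r show ?thesis by simp
qed

lemma dihedral_elt_mod: "0 < m \<Longrightarrow> dihedral_elt m r (k mod (2 * int m)) = dihedral_elt m r k"
proof -
  assume m: "0 < m"
  define q where "q = k div (2 * int m)"
  have k: "k = k mod (2 * int m) + 2 * int m * q"
    unfolding q_def by simp
  have "of_int k * (pi / real m)
      = of_int (k mod (2 * int m)) * (pi / real m) + 2 * pi * of_int q"
    using m by (subst k) (simp add: field_simps)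
  then show ?thesis by (simp add: dihedral_elt_def rotation_periodic mirror_periodic)
qed

lemma alt_sa_sb:
  assumes m: "0 < m"
  shows "alt (sa m) (sb m) n =
    dihedral_elt m (even n) (if even n then int n else int m + int n - 1)"
proof -
  have "pi + (real n - 1) * (pi / real m) = (real m + real n - 1) * (pi / real m)"
    using m by (simp add: field_simps)
  then show ?thesis
    using alt_mirror_pi[of "pi / real m" n]
    by (simp add: sa_def sb_def refl_root_a refl_root_b dihedral_elt_def)
qed

lemma alt_sb_sa:
  assumes m: "0 < m"
  shows "alt (sb m) (sa m) n =
    dihedral_elt m (even n) (if even n then - int n else int m - int n - 1)"
proof -
  have "pi - (real n + 1) * (pi / real m) = (real m - real n - 1) * (pi / real m)"
    using m by (simp add: field_simps)
  then show ?thesis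
    using alt_mirror_pi[of "pi / real m" n]
    by (simp add: sa_def sb_def refl_root_a refl_root_b dihedral_elt_def)
qed

lemma finite_Wgrp:
  assumes m: "0 < m"
  shows "finite (Wgrp m)"
proof (rule finite_subset)
  have "dihedral_elt m r k \<in> (\<lambda>(r, k). dihedral_elt m r k) ` (UNIV \<times> {0..<2 * int m})" for r k
    using m by (intro image_eqI[of _ _ "(r, k mod (2 * int m))"]) (simp_all add: dihedral_elt_mod)
  then show "Wgrp m \<subseteq> (\<lambda>(r, k). dihedral_elt m r k) ` (UNIV \<times> {0..<2 * int m})"
    using m by (auto simp: Wgrp_def alt_sa_sb alt_sb_sa)
qed simp

lemma eq_if_2m_dvd_diff:
  fixes i j m :: nat
  assumes "2 * int m dvd int i - int j" "i \<le> m" "j \<le> m" "0 < m"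
  shows "i = j"
proof (rule ccontr)
  assume "i \<noteq> j"
  then have "\<bar>2 * int m\<bar> \<le> \<bar>int i - int j\<bar>"
    using assms(1) by (intro dvd_imp_le_int) auto
  with assms(2-4) show False by linarith
qed

lemma eq_0_or_m_if_2m_dvd_sum:
  fixes i j m :: nat
  assumes "2 * int m dvd int i + int j" "i \<le> m" "j \<le> m"
  shows "i = j \<and> (i = 0 \<or> i = m)"
proof (cases "int i + int j = 0")
  case False
  then have "\<bar>2 * int m\<bar> \<le> \<bar>int i + int j\<bar>"
    using assms(1) by (intro dvd_imp_le_int)
  with assms(2,3) show ?thesis by linarith
qed simp

lemma alt_sa_sb_inj:
  assumes "0 < m" "i \<le> m" "j \<le> m" "alt (sa m) (sb m) i = alt (sa m) (sb m) j"
  shows "i = j"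
proof -
  have "even i = even j \<and> 2 * int m dvd (if even i then int i else int m + int i - 1)
      - (if even j then int j else int m + int j - 1)"
    using assms by (intro dihedral_elt_eq_imp) (simp_all add: alt_sa_sb)
  then have "2 * int m dvd int i - int j"
    by (auto split: if_splits simp: algebra_simps)
  then show ?thesis using assms by (intro eq_if_2m_dvd_diff)
qed

lemma alt_sb_sa_inj:
  assumes "0 < m" "i \<le> m" "j \<le> m" "alt (sb m) (sa m) i = alt (sb m) (sa m) j"
  shows "i = j"
proof -
  have "even i = even j \<and> 2 * int m dvd (if even i then - int i else int m - int i - 1)
      - (if even j then - int j else int m - int j - 1)"
    using assms by (intro dihedral_elt_eq_imp) (simp_all add: alt_sb_sa)
  then have "2 * int m dvd int j - int i"
    by (auto split: if_splits simp: algebra_simps)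
  then show ?thesis using assms by (intro eq_if_2m_dvd_diff[symmetric])
qed

lemma alt_sa_sb_eq_alt_sb_sa:
  assumes "0 < m" "i \<le> m" "j \<le> m" "alt (sa m) (sb m) i = alt (sb m) (sa m) j"
  shows "i = j \<and> (i = 0 \<or> i = m)"
proof -
  have "even i = even j \<and> 2 * int m dvd (if even i then int i else int m + int i - 1)
      - (if even j then - int j else int m - int j - 1)"
    using assms by (intro dihedral_elt_eq_imp) (simp_all add: alt_sa_sb alt_sb_sa)
  then have "2 * int m dvd int i + int j"
    by (auto split: if_splits simp: algebra_simps)
  then show ?thesis using assms by (intro eq_0_or_m_if_2m_dvd_sum)
qed

lemma sa_invol: "sa m \<circ> sa m = id"
  by (simp add: sa_def refl_root_a mirror_comp_mirror rotation_0)

lemma sb_invol: "sb m \<circ> sb m = id"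
  by (simp add: sb_def refl_root_b mirror_comp_mirror rotation_0)

text \<open>Unfolding \<open>Xalt\<close> into the twisted product is never wanted; \<open>Xw_Suc\<close> below evaluates it.\<close>

declare Xalt.simps(2) [simp del]

locale dihedral_action =
  fixes m :: nat and act :: "wel \<Rightarrow> 'q::comm_ring_1 \<Rightarrow> 'q" and y :: "vec \<Rightarrow> 'q" and a b :: vec
  assumes two_le_m: "2 \<le> m"
    and finite_W: "finite (Wgrp m)"
    and Wgrp_eq: "Wgrp m = range (alt (refl a) (refl b)) \<union> range (alt (refl b) (refl a))"
    and refl_a_invol: "refl a \<circ> refl a = id"
    and refl_b_invol: "refl b \<circ> refl b = id"
    and alt_ab_inj: "\<And>i j. i \<le> m \<Longrightarrow> j \<le> m \<Longrightarrow>
      alt (refl a) (refl b) i = alt (refl a) (refl b) j \<Longrightarrow> i = j"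
    and alt_ba_inj: "\<And>i j. i \<le> m \<Longrightarrow> j \<le> m \<Longrightarrow>
      alt (refl b) (refl a) i = alt (refl b) (refl a) j \<Longrightarrow> i = j"
    \<comment> \<open>the only coincidences: both empty words, and the braid relation in length \<open>m\<close>\<close>
    and alt_ab_eq_alt_ba: "\<And>i j. i \<le> m \<Longrightarrow> j \<le> m \<Longrightarrow>
      alt (refl a) (refl b) i = alt (refl b) (refl a) j \<Longrightarrow> i = j \<and> (i = 0 \<or> i = m)"
    and act_id: "act id = id"
    and act_comp: "\<And>u v. u \<in> Wgrp m \<Longrightarrow> v \<in> Wgrp m \<Longrightarrow> act (u \<circ> v) = act u \<circ> act v"
    and act_add: "\<And>w p q. w \<in> Wgrp m \<Longrightarrow> act w (p + q) = act w p + act w q"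
    and act_mult: "\<And>w p q. w \<in> Wgrp m \<Longrightarrow> act w (p * q) = act w p * act w q"
    and act_one: "\<And>w. w \<in> Wgrp m \<Longrightarrow> act w 1 = 1"
begin

abbreviation word :: "vec \<Rightarrow> vec \<Rightarrow> nat \<Rightarrow> wel" where
  "word c d \<equiv> alt (refl c) (refl d)"

abbreviation Xw :: "vec \<Rightarrow> vec \<Rightarrow> nat \<Rightarrow> wel \<Rightarrow> 'q" where
  "Xw c d \<equiv> Xalt m act y c d"

text \<open>Multiplying \<open>X_d X_c \<dots>\<close> by \<open>X_c\<close> on the left gives \<open>X_c X_d \<dots>\<close>, so the inductions
  below run over both orderings \<open>(c, d)\<close> of the simple roots at once.\<close>

definition simple_pair :: "vec \<Rightarrow> vec \<Rightarrow> bool" where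
  "simple_pair c d \<longleftrightarrow> (c = a \<and> d = b) \<or> (c = b \<and> d = a)"

lemma simple_pair_sym: "simple_pair c d \<Longrightarrow> simple_pair d c"
  unfolding simple_pair_def by auto

lemma Wgrp_eq_words: "simple_pair c d \<Longrightarrow> Wgrp m = range (word c d) \<union> range (word d c)"
  unfolding simple_pair_def using Wgrp_eq by auto

lemma refl_invol: "simple_pair c d \<Longrightarrow> refl c \<circ> refl c = id"
  unfolding simple_pair_def using refl_a_invol refl_b_invol by auto

lemma word_inj: "simple_pair c d \<Longrightarrow> i \<le> m \<Longrightarrow> j \<le> m \<Longrightarrow> word c d i = word c d j \<Longrightarrow> i = j"
  unfolding simple_pair_def using alt_ab_inj alt_ba_inj by blast

lemma word_eq_word_swap: "simple_pair c d \<Longrightarrow> i \<le> m \<Longrightarrow> j \<le> m \<Longrightarrow>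
    word c d i = word d c j \<Longrightarrow> i = j \<and> (i = 0 \<or> i = m)"
  unfolding simple_pair_def by (metis alt_ab_eq_alt_ba)

lemma word_in_Wgrp: "simple_pair c d \<Longrightarrow> word c d n \<in> Wgrp m"
  using Wgrp_eq_words by auto

lemma id_in_Wgrp: "id \<in> Wgrp m"
  using word_in_Wgrp[of a b 0] by (simp add: simple_pair_def)

lemma refl_in_Wgrp: "simple_pair c d \<Longrightarrow> refl c \<in> Wgrp m"
  using word_in_Wgrp[of c d 1] by simp

lemma refl_neq_id: "simple_pair c d \<Longrightarrow> refl c \<noteq> id"
  using word_inj[of c d 1 0] two_le_m by auto

lemma refl_comp_refl_comp: "simple_pair c d \<Longrightarrow> refl c \<circ> (refl c \<circ> w) = w"
  using refl_invol[of c d] by (simp add: o_assoc)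

lemma refl_comp_in_Wgrp:
  assumes p: "simple_pair c d" and w: "w \<in> Wgrp m"
  shows "refl c \<circ> w \<in> Wgrp m"
proof -
  obtain n where "w = word c d n \<or> w = word d c n"
    using w Wgrp_eq_words[OF p] by auto
  then show ?thesis
  proof
    assume "w = word c d n"
    then show ?thesis
      using refl_in_Wgrp[OF p] word_in_Wgrp[OF simple_pair_sym[OF p]]
      by (cases n) (simp_all add: refl_comp_refl_comp[OF p])
  next
    assume "w = word d c n"
    then show ?thesis using word_in_Wgrp[OF p, of "Suc n"] by simp
  qed
qed

lemma act_zero: "w \<in> Wgrp m \<Longrightarrow> act w 0 = 0"
  using act_add[of w 0 0] by simp

lemma act_uminus: "w \<in> Wgrp m \<Longrightarrow> act w (- p) = - act w p"
  using act_add[of w p "- p"] act_zero[of w] by (simp add: minus_unique)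

lemma act_minus_one_power: "w \<in> Wgrp m \<Longrightarrow> act w ((-1) ^ n) = (-1) ^ n"
  by (induction n) (simp_all add: act_one act_mult act_uminus)

lemma act_prod: "w \<in> Wgrp m \<Longrightarrow> act w (\<Prod>j\<in>A. f j) = (\<Prod>j\<in>A. act w (f j))"
  by (induction A rule: infinite_finite_induct) (simp_all add: act_one act_mult)

lemma act_sum: "w \<in> Wgrp m \<Longrightarrow> act w (\<Sum>j\<in>A. f j) = (\<Sum>j\<in>A. act w (f j))"
  by (induction A rule: infinite_finite_induct) (simp_all add: act_zero act_add)

lemma act_refl_invol: "simple_pair c d \<Longrightarrow> act (refl c) (act (refl c) p) = p"
  using act_comp[OF refl_in_Wgrp refl_in_Wgrp, of c d c d] refl_invol[of c d] act_id
  by (metis comp_apply id_apply)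

lemma act_word_Suc:
  assumes "simple_pair c d"
  shows "act (word c d (Suc k)) p = act (refl c) (act (word d c k) p)"
  using act_comp[OF refl_in_Wgrp[OF assms] word_in_Wgrp[OF simple_pair_sym[OF assms]]] by simp

lemma tmul_Xop:
  assumes p: "simple_pair c d" and w: "w \<in> Wgrp m"
  shows "tmul m act (Xop y c) P w = y c * P w - y c * act (refl c) (P (refl c \<circ> w))"
proof -
  let ?S = "{(u, v). u \<in> Wgrp m \<and> v \<in> Wgrp m \<and> u \<circ> v = w}"
  let ?T = "{(id, w), (refl c, refl c \<circ> w)}"
  let ?f = "\<lambda>(u, v). Xop y c u * act u (P v)"
  have "finite ?S"
    by (rule finite_subset[of _ "Wgrp m \<times> Wgrp m"]) (auto simp: finite_W)
  moreover have "?T \<subseteq> ?S"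
    using w id_in_Wgrp refl_in_Wgrp[OF p] refl_comp_in_Wgrp[OF p w] refl_invol[OF p]
    by (auto simp: o_assoc)
  moreover have "?f uv = 0" if "uv \<in> ?S - ?T" for uv
  proof -
    obtain u v where uv: "uv = (u, v)" by fastforce
    have "u \<noteq> refl c"
    proof
      assume "u = refl c"
      with that uv have "refl c \<circ> v = w" by simp
      then have "v = refl c \<circ> w"
        using refl_comp_refl_comp[OF p] by metis
      then show False using that uv \<open>u = refl c\<close> by auto
    qed
    moreover have "u \<noteq> id" using that uv by auto
    ultimately show ?thesis using uv by (simp add: Xop_def delta_def)
  qed
  ultimately have "sum ?f ?S = sum ?f ?T"
    by (intro sum.mono_neutral_right) auto
  also have "\<dots> = y c * P w - y c * act (refl c) (P (refl c \<circ> w))"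
    using refl_neq_id[OF p] by (simp add: Xop_def delta_def act_id)
  finally show ?thesis by (simp add: tmul_def)
qed

lemma Xw_Suc: "simple_pair c d \<Longrightarrow> w \<in> Wgrp m \<Longrightarrow>
    Xw c d (Suc i) w = y c * Xw d c i w - y c * act (refl c) (Xw d c i (refl c \<circ> w))"
  by (simp add: Xalt.simps(2) tmul_Xop)

lemma Xw_support: "simple_pair c d \<Longrightarrow> w \<in> Wgrp m \<Longrightarrow> Xw c d i w \<noteq> 0 \<Longrightarrow>
    w \<in> word c d ` {..i} \<union> word d c ` {..<i}"
proof (induction i arbitrary: c d w)
  case 0
  then show ?case by (simp add: delta_def id_def split: if_splits)
next
  case (Suc i)
  note p = Suc.prems(1) and w = Suc.prems(2)
  have "Xw d c i w \<noteq> 0 \<or> Xw d c i (refl c \<circ> w) \<noteq> 0"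
    using Suc.prems(3) Xw_Suc[OF p w] act_zero[OF refl_in_Wgrp[OF p]] by auto
  then show ?case
  proof
    assume "Xw d c i w \<noteq> 0"
    then show ?case using Suc.IH[OF simple_pair_sym[OF p] w] by auto
  next
    assume "Xw d c i (refl c \<circ> w) \<noteq> 0"
    then have "refl c \<circ> w \<in> word d c ` {..i} \<union> word c d ` {..<i}"
      using Suc.IH[OF simple_pair_sym[OF p] refl_comp_in_Wgrp[OF p w]] by blast
    then consider (dc) j where "j \<le> i" "refl c \<circ> w = word d c j"
      | (cd) j where "j < i" "refl c \<circ> w = word c d j"
      by blast
    moreover have w_eq: "w = refl c \<circ> v" if "refl c \<circ> w = v" for v
      using that refl_comp_refl_comp[OF p] by metis
    ultimately show ?case
    proof cases
      case (dc j)
      then have "w = word c d (Suc j)" using w_eq[OF dc(2)] by simp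
      then show ?thesis using dc(1) by (intro UnI1 rev_image_eqI[of "Suc j"]) simp_all
    next
      case (cd j)
      show ?thesis
      proof (cases j)
        case 0
        then have "w = word c d 1" using w_eq[OF cd(2)] by simp
        then show ?thesis by (intro UnI1 rev_image_eqI[of 1]) simp_all
      next
        case (Suc k)
        then have "w = word d c k" using w_eq[OF cd(2)] by (simp add: refl_comp_refl_comp[OF p])
        then show ?thesis using cd(1) Suc by (intro UnI2 rev_image_eqI[of k]) simp_all
      qed
    qed
  qed
qed

lemma Xw_word_eq_0:
  assumes p: "simple_pair c d" and jm: "j \<le> m" and ij: "i < j \<or> (0 < i \<and> i = j \<and> j < m)"
  shows "Xw d c i (word c d j) = 0"
proof (rule ccontr)
  assume "Xw d c i (word c d j) \<noteq> 0"
  then have "word c d j \<in> word d c ` {..i} \<union> word c d ` {..<i}"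
    using Xw_support[OF simple_pair_sym[OF p] word_in_Wgrp[OF p]] by blast
  then consider (dc) k where "k \<le> i" "word c d j = word d c k"
    | (cd) k where "k < i" "word c d j = word c d k"
    by blast
  then show False
  proof cases
    case (dc k)
    then show False using ij jm word_eq_word_swap[OF p, of j k] by auto
  next
    case (cd k)
    then show False using ij jm word_inj[OF p, of j k] by auto
  qed
qed

text \<open>\<open>ups a b (m - i)\<close> and \<open>ups b a (m - i)\<close> are the paper's \<open>\<upsilon>\<^sup>(\<^sup>i\<^sup>)\<^sub>\<alpha>\<close> and \<open>\<upsilon>\<^sup>(\<^sup>i\<^sup>)\<^sub>\<beta>\<close>
  (\<open>ups_a m act y i\<close> and \<open>ups_b m act y i\<close>).\<close>

definition ups :: "vec \<Rightarrow> vec \<Rightarrow> nat \<Rightarrow> 'q" where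
  "ups c d n = (\<Prod>j<n. act (word c d j) (y (if even j then c else d)))"

lemma ups_0: "ups c d 0 = 1"
  by (simp add: ups_def)

lemma ups_Suc:
  assumes p: "simple_pair c d"
  shows "ups c d (Suc n) = y c * act (refl c) (ups d c n)"
proof -
  have "(if even (Suc j) then c else d) = (if even j then d else c)" for j
    by simp
  then show ?thesis
    unfolding ups_def prod.lessThan_Suc_shift act_prod[OF refl_in_Wgrp[OF p]] act_word_Suc[OF p]
    by (simp add: act_id)
qed

lemma Xw_top_coeff:
  "simple_pair c d \<Longrightarrow> i \<le> m \<Longrightarrow> Xw c d i (word c d i) = (-1) ^ i * ups c d i"
proof (induction i arbitrary: c d)
  case 0
  then show ?case by (simp add: delta_def id_def ups_0)
next
  case (Suc i)
  note p = Suc.prems(1)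
  have "Xw c d (Suc i) (word c d (Suc i))
      = y c * Xw d c i (word c d (Suc i)) - y c * act (refl c) (Xw d c i (word d c i))"
    using Xw_Suc[OF p word_in_Wgrp[OF p, of "Suc i"], of i] by (simp add: refl_comp_refl_comp[OF p])
  also have "\<dots> = - y c * act (refl c) ((-1) ^ i * ups d c i)"
    using Xw_word_eq_0[OF p Suc.prems(2)] Suc.IH[OF simple_pair_sym[OF p]] Suc.prems(2) by simp
  also have "\<dots> = (-1) ^ Suc i * ups c d (Suc i)"
    by (simp add: ups_Suc[OF p] act_mult[OF refl_in_Wgrp[OF p]]
        act_minus_one_power[OF refl_in_Wgrp[OF p]])
  finally show ?case .
qed

lemma Xw_coeff_len_minus_1:
  assumes p: "simple_pair c d" and im: "Suc i \<le> m"
  shows "Xw c d (Suc i) (word d c i) = (-1) ^ i * y c * ups d c i"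
proof -
  have "Xw c d (Suc i) (word d c i)
      = y c * Xw d c i (word d c i) - y c * act (refl c) (Xw d c i (word c d (Suc i)))"
    using Xw_Suc[OF p word_in_Wgrp[OF simple_pair_sym[OF p]]] by simp
  then show ?thesis
    using Xw_word_eq_0[OF p im] Xw_top_coeff[OF simple_pair_sym[OF p]] im
      act_zero[OF refl_in_Wgrp[OF p]] by simp
qed

lemma Xw_coeff_len_minus_2:
  "simple_pair c d \<Longrightarrow> Suc (Suc i) \<le> m \<Longrightarrow>
    Xw c d (Suc (Suc i)) (word c d i) = (-1) ^ i * ups c d i * (\<Sum>k\<le>i. act (word c d k) (y c * y d))"
proof (induction i arbitrary: c d)
  case 0
  note p = "0.prems"(1)
  have "Xw c d (Suc (Suc 0)) (word c d 0)
      = y c * Xw d c (Suc 0) (word d c 0) - y c * act (refl c) (Xw d c (Suc 0) (word c d (Suc 0)))"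
    using Xw_Suc[OF p word_in_Wgrp[OF p, of 0], of "Suc 0"] by simp
  also have "\<dots> = y c * y d"
    using Xw_coeff_len_minus_1[OF simple_pair_sym[OF p], of 0] Xw_word_eq_0[OF p, of 1 1]
      "0.prems"(2) act_zero[OF refl_in_Wgrp[OF p]]
    by (simp add: ups_0)
  finally show ?case by (simp add: ups_0 act_id flip: id_def)
next
  case (Suc i)
  note p = Suc.prems(1)
  have "Xw c d (Suc (Suc (Suc i))) (word c d (Suc i))
      = y c * Xw d c (Suc (Suc i)) (word c d (Suc i))
        - y c * act (refl c) (Xw d c (Suc (Suc i)) (word d c i))"
    using Xw_Suc[OF p word_in_Wgrp[OF p, of "Suc i"], of "Suc (Suc i)"]
    by (simp add: refl_comp_refl_comp[OF p])
  also have "\<dots> = y c * ((-1) ^ Suc i * y d * ups c d (Suc i))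
        - y c * act (refl c) ((-1) ^ i * ups d c i * (\<Sum>k\<le>i. act (word d c k) (y d * y c)))"
    using Xw_coeff_len_minus_1[OF simple_pair_sym[OF p], of "Suc i"] Suc.IH[OF simple_pair_sym[OF p]]
      Suc.prems(2) by simp
  also have "\<dots> = (-1) ^ Suc i * ups c d (Suc i) * (\<Sum>k\<le>Suc i. act (word c d k) (y c * y d))"
  proof -
    have r: "refl c \<in> Wgrp m" by (rule refl_in_Wgrp[OF p])
    have "act (refl c) ((-1) ^ i * ups d c i * (\<Sum>k\<le>i. act (word d c k) (y d * y c)))
        = (-1) ^ i * act (refl c) (ups d c i) * (\<Sum>k\<le>i. act (word c d (Suc k)) (y c * y d))"
      by (simp only: act_mult[OF r] act_minus_one_power[OF r] act_sum[OF r]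
          act_word_Suc[OF p, symmetric] mult.commute[of "y d" "y c"])
    moreover have "(\<Sum>k\<le>Suc i. act (word c d k) (y c * y d))
        = y c * y d + (\<Sum>k\<le>i. act (word c d (Suc k)) (y c * y d))"
      by (simp only: sum.atMost_Suc_shift alt.simps(1) act_id id_apply)
    ultimately show ?thesis
      by (simp only: ups_Suc[OF p]) (simp add: algebra_simps)
  qed
  finally show ?case .
qed

lemma Xw_coeff_len_minus_3:
  assumes p: "simple_pair c d" and im: "Suc (Suc (Suc i)) \<le> m"
  shows "Xw c d (Suc (Suc (Suc i))) (word d c i) = (-1) ^ i * y c * ups d c i *
    ((\<Sum>k\<le>i. act (word d c k) (y c * y d)) + act (refl c) (y c * y d))"
proof -
  have r: "refl c \<in> Wgrp m" by (rule refl_in_Wgrp[OF p])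
  have "Xw c d (Suc (Suc (Suc i))) (word d c i)
      = y c * Xw d c (Suc (Suc i)) (word d c i)
        - y c * act (refl c) (Xw d c (Suc (Suc i)) (word c d (Suc i)))"
    using Xw_Suc[OF p word_in_Wgrp[OF simple_pair_sym[OF p], of i], of "Suc (Suc i)"] by simp
  also have "\<dots> = y c * ((-1) ^ i * ups d c i * (\<Sum>k\<le>i. act (word d c k) (y d * y c)))
      - y c * act (refl c) ((-1) ^ Suc i * y d * ups c d (Suc i))"
    using Xw_coeff_len_minus_2[OF simple_pair_sym[OF p], of i]
      Xw_coeff_len_minus_1[OF simple_pair_sym[OF p], of "Suc i"] im
    by simp
  also have "\<dots> = (-1) ^ i * y c * ups d c i *
      ((\<Sum>k\<le>i. act (word d c k) (y c * y d)) + act (refl c) (y c * y d))"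
    by (simp only: ups_Suc[OF p] act_mult[OF r] act_minus_one_power[OF r] act_refl_invol[OF p]
        mult.commute[of "y d" "y c"]) (simp add: algebra_simps)
  finally show ?thesis .
qed

end

lemma dihedral_action_I2:
  fixes act :: "wel \<Rightarrow> 'q::comm_ring_1 \<Rightarrow> 'q"
  assumes "2 \<le> m"
    and "act id = id"
    and "\<And>u v. u \<in> Wgrp m \<Longrightarrow> v \<in> Wgrp m \<Longrightarrow> act (u \<circ> v) = act u \<circ> act v"
    and "\<And>w p q. w \<in> Wgrp m \<Longrightarrow> act w (p + q) = act w p + act w q"
    and "\<And>w p q. w \<in> Wgrp m \<Longrightarrow> act w (p * q) = act w p * act w q"
    and "\<And>w. w \<in> Wgrp m \<Longrightarrow> act w 1 = 1"
  shows "dihedral_action m act (root_a m) (root_b m)"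
proof -
  have m: "0 < m" using assms(1) by simp
  show ?thesis
    using assms finite_Wgrp[OF m] alt_sa_sb_inj[OF m] alt_sb_sa_inj[OF m]
      alt_sa_sb_eq_alt_sb_sa[OF m] sa_invol sb_invol Wgrp_def
    unfolding dihedral_action_def sa_def[symmetric] sb_def[symmetric] by auto
qed

theorem lemma6p4:
  fixes m :: nat
    and act :: "wel \<Rightarrow> 'q::comm_ring_1 \<Rightarrow> 'q"
    and x y :: "vec \<Rightarrow> 'q"
  assumes m3: "m \<ge> 3"
    and act_id: "act id = id"
    and act_comp: "\<And>u v. u \<in> Wgrp m \<Longrightarrow> v \<in> Wgrp m \<Longrightarrow> act (u \<circ> v) = act u \<circ> act v"
    and act_add: "\<And>w a b. w \<in> Wgrp m \<Longrightarrow> act w (a + b) = act w a + act w b"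
    and act_mult: "\<And>w a b. w \<in> Wgrp m \<Longrightarrow> act w (a * b) = act w a * act w b"
    and act_one: "\<And>w. w \<in> Wgrp m \<Longrightarrow> act w 1 = 1"
    and act_x: "\<And>w g. w \<in> Wgrp m \<Longrightarrow> g \<in> roots m \<Longrightarrow> act w (x g) = x (w g)"
    and xy: "\<And>g. g \<in> roots m \<Longrightarrow> x g * y g = 1"
  shows "Xalt m act y (root_a m) (root_b m) m (alt (sb m) (sa m) (m - 3))
           = (if even m then -1 else 1) * y (root_a m) * ups_b m act y 3
             * (S_b m act 0 (m - 3) (y (root_a m) * y (root_b m))
                + act (sa m) (y (root_a m) * y (root_b m)))
       \<and> Xalt m act y (root_b m) (root_a m) m (alt (sa m) (sb m) (m - 3))
           = (if even m then -1 else 1) * y (root_b m) * ups_a m act y 3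
             * (S_a m act 0 (m - 3) (y (root_b m) * y (root_a m))
                + act (sb m) (y (root_b m) * y (root_a m)))"
proof -
  interpret dihedral_action m act y "root_a m" "root_b m"
    using m3 act_id act_comp act_add act_mult act_one by (intro dihedral_action_I2) auto
  have pairs: "simple_pair (root_a m) (root_b m)" "simple_pair (root_b m) (root_a m)"
    by (simp_all add: simple_pair_def)
  have len: "m = Suc (Suc (Suc (m - 3)))" using m3 by simp
  have sign: "(-1) ^ (m - 3) = (if even m then -1 else 1 :: 'q)"
    using m3 by (subst (2) len) simp
  have "ups_b m act y 3 = ups (root_b m) (root_a m) (m - 3)"
    by (auto simp: ups_def ups_b_def omega_def sa_def sb_def atLeast0LessThan intro!: prod.cong)
  moreover have "ups_a m act y 3 = ups (root_a m) (root_b m) (m - 3)"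
    by (simp add: ups_def ups_a_def omega_def sa_def sb_def atLeast0LessThan)
  ultimately show ?thesis
    using Xw_coeff_len_minus_3[OF pairs(1), of "m - 3"]
      Xw_coeff_len_minus_3[OF pairs(2), of "m - 3"]
    by (simp flip: len add: sign S_a_def S_b_def atLeast0AtMost sa_def sb_def)
qed

end
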